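(* Let $A\in\mathbf{R}^{I\times H}$ with columns $a_1,\dots,a_H$, and let $\mathcal{C}=\{A\nu:\nu\in\mathbf{R}^H,\ \nu\ge 0\}$. Let $B\in\mathbf{R}^{m\times I}$ be such that $\mathcal{C}=\{t\in\mathbf{R}^I: Bt\le 0\}$, with rows $b_1',\dots,b_m'$ ordered as $B=\begin{bmatrix}B^{\le}\\ B^{=}\end{bmatrix}$, where $B^{\le}\in\mathbf{R}^{\bar m\times I}$ consists of the rows corresponding to inequality constraints (rows $b_k$ for which $b_k'a_h\neq 0$ for some $h$) and $B^{=}\in\mathbf{R}^{(m-\bar m)\times I}$ consists of the rows corresponding to equality constraints (rows $b_k$ with $b_k't=0$ for all $t\in\mathcal{C}$). For $\tau>0$ define $\mathcal{C}_\tau=\{A\nu:\nu\ge(\tau/H)\mathbf{1}_H\}$, where $\mathbf{1}_H$ is the $H$-vector of ones. Then $$\mathcal{C}_\tau=\{t\in\mathbf{R}^I: Bt\le-\tau\phi\}$$ for some $\phi=(\phi_1,\dots,\phi_m)'$ in the column space of $B$ with the properties that (i) $(\phi_1,\dots,\phi_{\bar m})'\in\mathbf{R}^{\bar m}_{++}$, and (ii) $\phi_k=0$ for all $k>\bar m$.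
   Context: Vector inequalities are componentwise; $\mathbf{R}^{\bar m}_{++}$ denotes vectors with all entries strictly positive. *)

theory Defs
  imports "Jordan_Normal_Form.Matrix"
begin

definition cone_gen :: "real mat \<Rightarrow> real vec set" where
  "cone_gen A = {A *\<^sub>v \<nu> | \<nu>. \<nu> \<in> carrier_vec (dim_col A) \<and> (\<forall>h<dim_col A. \<nu> $ h \<ge> 0)}"

definition cone_tau :: "real mat \<Rightarrow> real \<Rightarrow> real vec set" where
  "cone_tau A \<tau> = {A *\<^sub>v \<nu> | \<nu>. \<nu> \<in> carrier_vec (dim_col A) \<and>
      (\<forall>h<dim_col A. \<nu> $ h \<ge> \<tau> / real (dim_col A))}"

end

theory Submission
  imports Defs
begin

text \<open>
  Let c be the barycentre of the columns of A. Since \<open>\<nu> \<ge> (\<tau>/H) \<one>\<close> means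
  \<open>\<nu> = (\<tau>/H) \<one> + \<mu>\<close> with \<open>\<mu> \<ge> 0\<close>, the set \<open>C\<^sub>\<tau>\<close> is the translate \<open>\<tau> c + C\<close>, hence
  \<open>C\<^sub>\<tau> = {t. B t \<le> \<tau> B c}\<close> and \<open>\<phi> = - B c\<close> works. For an equality row
  \<open>b\<^sub>k' c = 0\<close> because c \<in> C; for an inequality row every \<open>b\<^sub>k' a\<^sub>h \<le> 0\<close> and one of them
  is nonzero, so their mean \<open>b\<^sub>k' c\<close> is negative.
\<close>

definition cone_center :: "real mat \<Rightarrow> real vec" where
  "cone_center A = A *\<^sub>v vec (dim_col A) (\<lambda>_. 1 / real (dim_col A))"

lemma col_eq_mult_mat_vec_unit_vec:
  fixes A :: "'a :: comm_ring_1 mat"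
  assumes A: "A \<in> carrier_mat I H" and h: "h < H"
  shows "col A h = A *\<^sub>v unit_vec H h"
proof (rule eq_vecI)
  fix i assume "i < dim_vec (A *\<^sub>v unit_vec H h)"
  hence i: "i < I" using A by simp
  have "row A i \<bullet> unit_vec H h = row A i $ h" using h by simp
  thus "col A h $ i = (A *\<^sub>v unit_vec H h) $ i" using A h i by simp
qed (use A in simp)

lemma col_mem_cone_gen:
  assumes A: "A \<in> carrier_mat I H" and h: "h < H"
  shows "col A h \<in> cone_gen A"
  unfolding cone_gen_def col_eq_mult_mat_vec_unit_vec[OF A h] using A h by auto

lemma cone_center_carrier: "A \<in> carrier_mat I H \<Longrightarrow> cone_center A \<in> carrier_vec I"
  unfolding cone_center_def by simp

lemma cone_center_mem_cone_gen: "cone_center A \<in> cone_gen A"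
  unfolding cone_gen_def cone_center_def by auto

lemma mem_cone_tau_iff:
  assumes A: "A \<in> carrier_mat I H"
  shows "t \<in> cone_tau A \<tau> \<longleftrightarrow> t \<in> carrier_vec I \<and> t - \<tau> \<cdot>\<^sub>v cone_center A \<in> cone_gen A"
proof -
  define e :: "real vec" where "e = vec H (\<lambda>_. 1 / real H)"
  have e: "e \<in> carrier_vec H" unfolding e_def by simp
  have c: "cone_center A = A *\<^sub>v e" unfolding cone_center_def e_def using A by simp
  have shift: "A *\<^sub>v \<nu> - \<tau> \<cdot>\<^sub>v cone_center A = A *\<^sub>v (\<nu> - \<tau> \<cdot>\<^sub>v e)"
    if "\<nu> \<in> carrier_vec H" for \<nu>
    using mult_minus_distrib_mat_vec[OF A that, of "\<tau> \<cdot>\<^sub>v e"] mult_mat_vec[OF A e] that e c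
    by simp
  show ?thesis
  proof
    assume "t \<in> cone_tau A \<tau>"
    then obtain \<nu> where \<nu>: "t = A *\<^sub>v \<nu>" "\<nu> \<in> carrier_vec H" "\<forall>h<H. \<nu> $ h \<ge> \<tau> / real H"
      unfolding cone_tau_def using A by auto
    have "A *\<^sub>v (\<nu> - \<tau> \<cdot>\<^sub>v e) \<in> cone_gen A"
      unfolding cone_gen_def using \<nu> e A by (auto simp: e_def)
    then show "t \<in> carrier_vec I \<and> t - \<tau> \<cdot>\<^sub>v cone_center A \<in> cone_gen A"
      using shift \<nu> A by simp
  next
    assume t: "t \<in> carrier_vec I \<and> t - \<tau> \<cdot>\<^sub>v cone_center A \<in> cone_gen A"
    then obtain \<mu> where \<mu>: "t - \<tau> \<cdot>\<^sub>v cone_center A = A *\<^sub>v \<mu>" "\<mu> \<in> carrier_vec H"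
        "\<forall>h<H. \<mu> $ h \<ge> 0"
      unfolding cone_gen_def using A by auto
    have "A *\<^sub>v (\<mu> + \<tau> \<cdot>\<^sub>v e) = (t - \<tau> \<cdot>\<^sub>v cone_center A) + \<tau> \<cdot>\<^sub>v cone_center A"
      using mult_add_distrib_mat_vec[OF A \<mu>(2), of "\<tau> \<cdot>\<^sub>v e"] mult_mat_vec[OF A e] e c \<mu>
      by simp
    also have "\<dots> = t" using t cone_center_carrier[OF A] by auto
    finally have "t = A *\<^sub>v (\<mu> + \<tau> \<cdot>\<^sub>v e)" by simp
    moreover have "\<forall>h<H. (\<mu> + \<tau> \<cdot>\<^sub>v e) $ h \<ge> \<tau> / real H"
      using \<mu> e by (auto simp: e_def)
    ultimately show "t \<in> cone_tau A \<tau>"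
      unfolding cone_tau_def using \<mu> e A by auto
  qed
qed

lemma scalar_prod_cone_center:
  assumes A: "A \<in> carrier_mat I H" and b: "b \<in> carrier_vec I"
  shows "b \<bullet> cone_center A = (\<Sum>h<H. b \<bullet> col A h) / real H"
proof -
  have "b \<bullet> cone_center A = vec H (\<lambda>h. b \<bullet> col A h) \<bullet> vec H (\<lambda>_. 1 / real H)"
    unfolding cone_center_def using assoc_scalar_prod[OF b A, of "vec H (\<lambda>_. 1 / real H)"] A
    by (simp add: mult_mat_vec_def)
  also have "\<dots> = (\<Sum>h<H. b \<bullet> col A h * (1 / real H))"
    using A by (simp add: scalar_prod_def lessThan_atLeast0)
  finally show ?thesis by (simp add: sum_divide_distrib)
qed

lemma scalar_prod_cone_center_neg:
  assumes A: "A \<in> carrier_mat I H" and b: "b \<in> carrier_vec I"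
    and nonpos: "\<forall>t\<in>cone_gen A. b \<bullet> t \<le> 0"
    and h0: "h0 < H" "b \<bullet> col A h0 \<noteq> 0"
  shows "b \<bullet> cone_center A < 0"
proof -
  have le: "b \<bullet> col A h \<le> 0" if "h < H" for h
    using nonpos col_mem_cone_gen[OF A that] by blast
  have "(\<Sum>h<H. b \<bullet> col A h) < (\<Sum>h<H. 0)"
  proof (rule sum_strict_mono_ex1)
    show "\<exists>h\<in>{..<H}. b \<bullet> col A h < 0"
      using le[OF h0(1)] h0 by (intro bexI[of _ h0]) auto
  qed (use le in auto)
  with h0(1) show ?thesis
    by (simp add: scalar_prod_cone_center[OF A b] divide_neg_pos)
qed

lemma index_mult_mat_vec_minus_smult:
  fixes B :: "real mat"
  assumes B: "B \<in> carrier_mat m I" and t: "t \<in> carrier_vec I" and c: "c \<in> carrier_vec I"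
    and k: "k < m"
  shows "(B *\<^sub>v (t - \<tau> \<cdot>\<^sub>v c)) $ k = (B *\<^sub>v t) $ k - \<tau> * (B *\<^sub>v c) $ k"
  using mult_minus_distrib_mat_vec[OF B t, of "\<tau> \<cdot>\<^sub>v c"] mult_mat_vec[OF B c] B t c k
  by simp

theorem lemma1:
  fixes A B :: "real mat" and I H m mbar :: nat
  assumes A: "A \<in> carrier_mat I H"
    and B: "B \<in> carrier_mat m I"
    and mbar: "mbar \<le> m"
    and C_eq: "cone_gen A = {t \<in> carrier_vec I. \<forall>k<m. (B *\<^sub>v t) $ k \<le> 0}"
    and ineq_rows: "\<forall>k<mbar. \<exists>h<H. row B k \<bullet> col A h \<noteq> 0"
    and eq_rows: "\<forall>k. mbar \<le> k \<and> k < m \<longrightarrow> (\<forall>t\<in>cone_gen A. row B k \<bullet> t = 0)"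
  shows "\<exists>\<phi>\<in>carrier_vec m. (\<exists>x\<in>carrier_vec I. \<phi> = B *\<^sub>v x)
           \<and> (\<forall>k<mbar. \<phi> $ k > 0)
           \<and> (\<forall>k. mbar \<le> k \<and> k < m \<longrightarrow> \<phi> $ k = 0)
           \<and> (\<forall>\<tau>>0. cone_tau A \<tau> =
                 {t \<in> carrier_vec I. \<forall>k<m. (B *\<^sub>v t) $ k \<le> - \<tau> * \<phi> $ k})"
proof -
  let ?c = "cone_center A"
  have c: "?c \<in> carrier_vec I" using cone_center_carrier[OF A] .
  have row_B: "row B k \<in> carrier_vec I" "(B *\<^sub>v t) $ k = row B k \<bullet> t" if "k < m" for k t
    using B that by auto
  have \<phi>: "(B *\<^sub>v (- ?c)) $ k = - (row B k \<bullet> ?c)" if "k < m" for k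
    using B c that by auto
  have row_nonpos: "\<forall>t\<in>cone_gen A. row B k \<bullet> t \<le> 0" if "k < m" for k
    using C_eq that B by auto
  have "cone_tau A \<tau> = {t \<in> carrier_vec I. \<forall>k<m. (B *\<^sub>v t) $ k \<le> - \<tau> * (B *\<^sub>v (- ?c)) $ k}"
    for \<tau>
    using mem_cone_tau_iff[OF A] C_eq index_mult_mat_vec_minus_smult[OF B _ c] \<phi> row_B(2) c
    by auto
  moreover have "(B *\<^sub>v (- ?c)) $ k > 0" if "k < mbar" for k
    using scalar_prod_cone_center_neg[OF A row_B(1) row_nonpos] ineq_rows \<phi> that mbar by force
  moreover have "(B *\<^sub>v (- ?c)) $ k = 0" if "mbar \<le> k \<and> k < m" for k
    using eq_rows cone_center_mem_cone_gen \<phi> that by auto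
  ultimately show ?thesis
    using B c by (intro bexI[of _ "B *\<^sub>v (- ?c)"]) auto
qed

end
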